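(* For $0<|q|<1$, \[ \frac{f_1^2f_4^2f_{10}^2}{qf_2^2f_5^2f_{20}^2} - \frac{f_2^4f_{20}^2}{f_4^2f_{10}^4} = \frac{f_1^3f_5}{qf_2f_{10}^3}. \]
   Context: For $m\in\mathbb{N}$ and $|q|<1$, $f_m:=\prod_{n\ge1}(1-q^{mn})$. *)

theory Defs
  imports "HOL-Analysis.Analysis"
begin

definition qf :: "nat \<Rightarrow> complex \<Rightarrow> complex" where
  "qf m q = (\<Prod>n. 1 - q ^ (m * Suc n))"

end

theory Submission
  imports Defs
begin

text \<open>
  By the Jacobi triple product, \<open>\<theta>(c) = \<Sum>\<^sub>n q\<^bsup>10 n(n-1)/2\<^esup> c\<^sup>n\<close> equals
  \<open>(-c; q\<^sup>10)\<^sub>\<infinity> (-q\<^sup>10/c; q\<^sup>10)\<^sub>\<infinity> f\<^sub>1\<^sub>0\<close>, and dissecting the products modulo \<open>q\<^sup>10\<close> turns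
  the eta quotients of the identity into \<open>\<theta>(q\<^sup>2) \<theta>(q\<^sup>4)\<close>, \<open>\<theta>(q) \<theta>(q\<^sup>3)\<close>,
  \<open>\<theta>(-q) \<theta>(-q\<^sup>3)\<close> and \<open>\<theta>(-q\<^sup>5)\<close>.  The claim becomes
  \<open>(\<theta>(q\<^sup>2) \<theta>(q\<^sup>4))\<^sup>2 - q (\<theta>(q) \<theta>(q\<^sup>3))\<^sup>2 = \<theta>(-q) \<theta>(-q\<^sup>3) \<theta>(-q\<^sup>5)\<^sup>2\<close>,
  an instance of Weierstrass' three-term addition formula for theta functions.  That formula follows
  from the dissection of a product of two theta series along the parity of \<open>m + n\<close>:
  \<open>theta p a * theta p b = theta p' (a b) * theta p' (p a / b) + a * theta p' (p a b) * theta p' (p\<^sup>2 a / b)\<close>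
  with \<open>p' = p\<^sup>2\<close>.  The triple product itself is the limit of its finite q-binomial form, the
  limit being justified by Tannery's theorem.
\<close>

section \<open>q-Pochhammer symbols\<close>

definition qpoch :: "complex \<Rightarrow> complex \<Rightarrow> complex" where
  "qpoch x r = (\<Prod>n. 1 - x * r ^ n)"

lemma qpoch_convergent_prod:
  fixes x r :: complex
  assumes "norm r < 1"
  shows "convergent_prod (\<lambda>n. 1 - x * r ^ n)"
proof -
  have "summable (\<lambda>n. norm x * norm r ^ n)"
    using assms by (intro summable_mult summable_geometric) auto
  moreover have "norm ((1 - x * r ^ n) - 1) = norm x * norm r ^ n" for n
    by (simp add: norm_mult norm_power)
  ultimately have "summable (\<lambda>n. norm ((1 - x * r ^ n) - 1))"
    by simp
  then show ?thesis
    by (intro abs_convergent_prod_imp_convergent_prod summable_imp_abs_convergent_prod)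
qed

lemma qpoch_tendsto:
  assumes "norm r < 1"
  shows "(\<lambda>N. \<Prod>n<N. 1 - x * r ^ n) \<longlonglongrightarrow> qpoch x r"
proof -
  have "(\<lambda>N. \<Prod>n<Suc N. 1 - x * r ^ n) \<longlonglongrightarrow> qpoch x r"
    using convergent_prod_LIMSEQ[OF qpoch_convergent_prod[OF assms]]
    by (simp add: qpoch_def lessThan_Suc_atMost)
  then show ?thesis by (rule LIMSEQ_imp_Suc)
qed

lemma qpoch_nonzero:
  assumes "norm x < 1" "norm r < 1"
  shows "qpoch x r \<noteq> 0"
proof -
  have "norm (x * r ^ n) < 1" for n
  proof -
    have "norm x * norm r ^ n \<le> norm x"
      using assms by (intro mult_left_le power_le_one) auto
    then show ?thesis
      using assms by (simp add: norm_mult norm_power)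
  qed
  then have "1 - x * r ^ n \<noteq> 0" for n
    by (metis norm_one order.irrefl right_minus_eq)
  then show ?thesis
    unfolding qpoch_def by (intro prodinf_nonzero qpoch_convergent_prod assms(2))
qed

lemma qpoch_dissect:
  assumes "norm r < 1" "c > 0"
  shows "qpoch x r = (\<Prod>k<c. qpoch (x * r ^ k) (r ^ c))"
proof -
  have rc: "norm (r ^ c) < 1"
    using assms by (simp add: norm_power power_less_one_iff)
  have regroup: "(\<Prod>n<c*N. 1 - x * r ^ n) = (\<Prod>k<c. \<Prod>m<N. 1 - (x * r ^ k) * (r ^ c) ^ m)" for N
  proof -
    have "(\<Prod>n\<in>{m*c..<m*c+c}. 1 - x * r ^ n) = (\<Prod>k<c. 1 - x * r ^ (m*c + k))" for m
      by (rule prod.reindex_bij_witness[where j="\<lambda>n. n - m*c" and i="\<lambda>k. m*c + k"]) auto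
    then have "(\<Prod>n<c*N. 1 - x * r ^ n) = (\<Prod>m<N. \<Prod>k<c. 1 - x * r ^ (m*c + k))"
      using prod.nat_group[of "\<lambda>n. 1 - x * r ^ n" c N] by (simp add: mult.commute)
    also have "\<dots> = (\<Prod>k<c. \<Prod>m<N. 1 - x * r ^ (m*c + k))"
      by (rule prod.swap)
    also have "\<dots> = (\<Prod>k<c. \<Prod>m<N. 1 - (x * r ^ k) * (r ^ c) ^ m)"
      by (simp add: power_add power_mult[symmetric] mult_ac)
    finally show ?thesis .
  qed
  have "strict_mono (\<lambda>N. c * N)"
    using assms(2) by (auto simp: strict_mono_def)
  from LIMSEQ_subseq_LIMSEQ[OF qpoch_tendsto[OF assms(1), of x] this]
  have "(\<lambda>N. \<Prod>k<c. \<Prod>m<N. 1 - (x * r ^ k) * (r ^ c) ^ m) \<longlonglongrightarrow> qpoch x r"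
    by (simp add: o_def regroup)
  moreover have "(\<lambda>N. \<Prod>k<c. \<Prod>m<N. 1 - (x * r ^ k) * (r ^ c) ^ m)
                   \<longlonglongrightarrow> (\<Prod>k<c. qpoch (x * r ^ k) (r ^ c))"
    by (intro tendsto_prod qpoch_tendsto rc)
  ultimately show ?thesis
    by (rule LIMSEQ_unique)
qed

lemma qpoch_mult_minus:
  assumes "norm r < 1"
  shows "qpoch x r * qpoch (-x) r = qpoch (x^2) (r^2)"
proof -
  have r2: "norm (r^2) < 1"
    using assms by (simp add: norm_power power_less_one_iff)
  have "(1 - x * r ^ n) * (1 - (-x) * r ^ n) = 1 - x^2 * (r^2) ^ n" for n
  proof -
    have "(r^2) ^ n = (r^n)^2"
      by (metis power_mult mult.commute)
    then show ?thesis
      by (simp add: power2_eq_square algebra_simps)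
  qed
  then have "(\<lambda>N. \<Prod>n<N. 1 - x^2 * (r^2) ^ n) \<longlonglongrightarrow> qpoch x r * qpoch (-x) r"
    using tendsto_mult[OF qpoch_tendsto[OF assms, of x] qpoch_tendsto[OF assms, of "-x"]]
    by (simp add: prod.distrib[symmetric])
  then show ?thesis
    using qpoch_tendsto[OF r2] LIMSEQ_unique by blast
qed

lemma qpoch_unfold:
  assumes "norm r < 1"
  shows "qpoch x r = (1 - x) * qpoch (x * r) r"
proof -
  have "(\<lambda>N. \<Prod>n<Suc N. 1 - x * r ^ n) \<longlonglongrightarrow> qpoch x r"
    using qpoch_tendsto[OF assms] by (rule LIMSEQ_Suc)
  moreover have "(\<Prod>n<Suc N. 1 - x * r ^ n) = (1 - x) * (\<Prod>n<N. 1 - (x * r) * r ^ n)" for N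
    by (simp add: prod.lessThan_Suc_shift mult.assoc del: prod.lessThan_Suc)
  ultimately have "(\<lambda>N. (1 - x) * (\<Prod>n<N. 1 - (x * r) * r ^ n)) \<longlonglongrightarrow> qpoch x r"
    by simp
  moreover have "(\<lambda>N. (1 - x) * (\<Prod>n<N. 1 - (x * r) * r ^ n)) \<longlonglongrightarrow> (1 - x) * qpoch (x * r) r"
    by (intro tendsto_mult tendsto_const qpoch_tendsto assms)
  ultimately show ?thesis
    by (rule LIMSEQ_unique)
qed

lemma qpoch_dissect_5:
  assumes "norm r < 1"
  shows "qpoch x r = qpoch x (r^5) * qpoch (x * r) (r^5) * qpoch (x * r^2) (r^5)
                     * qpoch (x * r^3) (r^5) * qpoch (x * r^4) (r^5)"
proof -
  have "{..<5::nat} = {0, 1, 2, 3, 4}"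
    by auto
  then show ?thesis
    using qpoch_dissect[OF assms, of 5 x] by (simp add: mult.assoc)
qed

lemma qf_eq_qpoch: "qf m q = qpoch (q^m) (q^m)"
  unfolding qf_def qpoch_def
  by (simp add: power_mult[symmetric] power_add[symmetric] mult.commute)

section \<open>Gaussian binomial coefficients\<close>

text \<open>\<open>qfact p m = (p; p)\<^sub>m\<close>; it is polymorphic because the estimates below use it at \<open>norm p\<close>.\<close>

definition qfact :: "'a::comm_ring_1 \<Rightarrow> nat \<Rightarrow> 'a" where
  "qfact p m = (\<Prod>j<m. 1 - p ^ Suc j)"

lemma qfact_0 [simp]: "qfact p 0 = 1"
  by (simp add: qfact_def)

lemma qfact_Suc: "qfact p (Suc m) = qfact p m * (1 - p ^ Suc m)"
  by (simp add: qfact_def)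

lemma power_neq_one_if_norm_less:
  fixes p :: "'a::real_normed_div_algebra"
  assumes "norm p < 1" "k > 0"
  shows "p ^ k \<noteq> 1"
proof
  assume "p ^ k = 1"
  then have "norm p ^ k = 1"
    by (metis norm_one norm_power)
  moreover have "norm p ^ k < 1"
    using assms by (simp add: power_less_one_iff)
  ultimately show False
    by simp
qed

lemma qfact_nonzero:
  fixes p :: complex
  assumes "norm p < 1"
  shows "qfact p m \<noteq> 0"
proof (induction m)
  case (Suc m)
  then show ?case
    using power_neq_one_if_norm_less[OF assms, of "Suc m"] by (simp add: qfact_Suc del: power_Suc)
qed simp

lemma qfact_tendsto:
  assumes "norm p < 1"
  shows "qfact p \<longlonglongrightarrow> qpoch p p"
proof -
  have "qfact p = (\<lambda>N. \<Prod>n<N. 1 - p * p ^ n)"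
    by (simp add: fun_eq_iff qfact_def)
  then show ?thesis
    using qpoch_tendsto[OF assms, of p] by simp
qed

lemma qfact_pos:
  fixes a :: real
  assumes "0 \<le> a" "a < 1"
  shows "qfact a m > 0"
  unfolding qfact_def using assms by (intro prod_pos) (simp add: power_less_one_iff del: power_Suc)

lemma qfact_lower_bound:
  fixes a :: real
  assumes "0 \<le> a" "a < 1"
  obtains L where "L > 0" "\<And>m. L \<le> qfact a m"
proof -
  define f where "f j = 1 - a ^ Suc j" for j
  have pos: "f j > 0" and le1: "f j \<le> 1" for j
    using assms by (simp_all add: f_def power_less_one_iff del: power_Suc)
  have "summable (\<lambda>j. a * a ^ j)"
    using assms by (intro summable_mult summable_geometric) auto
  moreover have "norm (f j - 1) = a * a ^ j" for j
    using assms by (simp add: f_def)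
  ultimately have "convergent_prod f"
    by (intro abs_convergent_prod_imp_convergent_prod summable_imp_abs_convergent_prod) simp
  then have "prodinf f > 0" and "prodinf f \<le> prod f {..<m}" for m
    using pos le1 by (auto intro!: less_0_prodinf prod_ge_prodinf simp: convergent_prod_has_prod less_imp_le)
  moreover have "prod f {..<m} = qfact a m" for m
    by (simp add: qfact_def f_def)
  ultimately show ?thesis
    using that by auto
qed

definition qbinom :: "complex \<Rightarrow> nat \<Rightarrow> nat \<Rightarrow> complex" where
  "qbinom p m i = (if i \<le> m then qfact p m / (qfact p i * qfact p (m - i)) else 0)"

lemma qbinom_0 [simp]: "norm p < 1 \<Longrightarrow> qbinom p m 0 = 1"
  by (simp add: qbinom_def qfact_nonzero)

lemma qbinom_above [simp]: "m < i \<Longrightarrow> qbinom p m i = 0"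
  by (simp add: qbinom_def)

lemma qbinom_symmetric: "i \<le> m \<Longrightarrow> qbinom p m (m - i) = qbinom p m i"
  by (simp add: qbinom_def mult.commute)

lemma one_minus_power_nonzero:
  fixes p :: complex
  shows "norm p < 1 \<Longrightarrow> 1 - p ^ Suc k \<noteq> 0"
  using power_neq_one_if_norm_less[of p "Suc k"] by (simp del: power_Suc)

lemma qbinom_Suc_Suc_ratio:
  assumes "norm p < 1"
  shows "(1 - p ^ Suc i) * qbinom p (Suc m) (Suc i) = (1 - p ^ Suc m) * qbinom p m i"
proof (cases "i \<le> m")
  case True
  then have "Suc m - Suc i = m - i"
    by simp
  then show ?thesis
    using True qfact_nonzero[OF assms] one_minus_power_nonzero[OF assms]
    by (simp add: qbinom_def qfact_Suc field_simps del: power_Suc)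
qed simp

lemma qbinom_Suc_ratio:
  assumes "norm p < 1"
  shows "(1 - p ^ Suc i) * qbinom p m (Suc i) = (1 - p ^ (m - i)) * qbinom p m i"
proof (cases "i < m")
  case True
  then have "m - i = Suc (m - Suc i)"
    by simp
  then show ?thesis
    using True qfact_nonzero[OF assms] one_minus_power_nonzero[OF assms]
    by (simp add: qbinom_def qfact_Suc field_simps del: power_Suc)
next
  case False
  then show ?thesis
    by (cases "i = m") auto
qed

lemma qbinom_Suc_Suc:
  assumes "norm p < 1"
  shows "qbinom p (Suc m) (Suc i) = qbinom p m i + p ^ Suc i * qbinom p m (Suc i)"
proof (cases "i \<le> m")
  case True
  define x y where "x = p ^ Suc i" and "y = p ^ (m - i)"
  have ratio: "(1 - y) * qbinom p m i = (1 - x) * qbinom p m (Suc i)"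
    unfolding x_def y_def by (rule qbinom_Suc_ratio[OF assms, symmetric])
  have "(1 - x) * qbinom p (Suc m) (Suc i) = (1 - x * y) * qbinom p m i"
    using True qbinom_Suc_Suc_ratio[OF assms, of i m] by (simp add: x_def y_def flip: power_add)
  also have "\<dots> = (1 - x) * qbinom p m i + x * ((1 - y) * qbinom p m i)"
    by (simp add: algebra_simps)
  also have "\<dots> = (1 - x) * (qbinom p m i + x * qbinom p m (Suc i))"
    unfolding ratio by (simp add: algebra_simps)
  finally show ?thesis
    using one_minus_power_nonzero[OF assms, of i] by (simp add: x_def)
qed simp

lemma qbinom_Suc_Suc':
  assumes "norm p < 1"
  shows "qbinom p (Suc m) (Suc i) = p ^ (m - i) * qbinom p m i + qbinom p m (Suc i)"
proof (cases "i \<le> m")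
  case True
  define x y where "x = p ^ Suc i" and "y = p ^ (m - i)"
  have ratio: "(1 - y) * qbinom p m i = (1 - x) * qbinom p m (Suc i)"
    unfolding x_def y_def by (rule qbinom_Suc_ratio[OF assms, symmetric])
  have "(1 - x) * qbinom p (Suc m) (Suc i) = (1 - x * y) * qbinom p m i"
    using True qbinom_Suc_Suc_ratio[OF assms, of i m] by (simp add: x_def y_def flip: power_add)
  also have "\<dots> = (1 - x) * (y * qbinom p m i) + (1 - y) * qbinom p m i"
    by (simp add: algebra_simps)
  also have "\<dots> = (1 - x) * (y * qbinom p m i + qbinom p m (Suc i))"
    unfolding ratio by (simp add: algebra_simps)
  finally show ?thesis
    using one_minus_power_nonzero[OF assms, of i] by (simp add: x_def y_def)
qed simp

lemma qbinom_norm_le: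
  assumes "norm p < 1"
  shows "norm (qbinom p m i) \<le> 1 / qfact (norm p) i"
proof (induction m arbitrary: i)
  case 0
  then show ?case
    using assms qfact_pos[of "norm p" i] by (cases i) auto
next
  case (Suc m)
  show ?case
  proof (cases i)
    case 0
    then show ?thesis
      using assms by simp
  next
    case (Suc j)
    have pos: "qfact (norm p) j > 0" "1 - norm p ^ Suc j > 0"
      using assms qfact_pos[of "norm p" j] by (simp_all add: power_less_one_iff del: power_Suc)
    have "norm (qbinom p (Suc m) (Suc j)) \<le> norm (qbinom p m j) + norm p ^ Suc j * norm (qbinom p m (Suc j))"
      unfolding qbinom_Suc_Suc[OF assms] by (metis norm_mult norm_power norm_triangle_ineq)
    also have "\<dots> \<le> 1 / qfact (norm p) j + norm p ^ Suc j * (1 / qfact (norm p) (Suc j))"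
      by (intro add_mono mult_left_mono Suc.IH) auto
    also have "\<dots> = 1 / qfact (norm p) (Suc j)"
      using pos by (simp add: qfact_Suc field_simps del: power_Suc)
    finally show ?thesis
      using Suc by simp
  qed
qed

lemma qbinom_bounded:
  assumes "norm p < 1"
  obtains B where "\<And>m i. norm (qbinom p m i) \<le> B"
proof -
  obtain L where L: "L > 0" "\<And>i. L \<le> qfact (norm p) i"
    using qfact_lower_bound[of "norm p"] assms by auto
  have "norm (qbinom p m i) \<le> 1 / L" for m i
    using qbinom_norm_le[OF assms, of m i] L
    by (smt (verit) frac_le)
  then show ?thesis
    using that by blast
qed

lemma qbinom_central_tendsto:
  assumes "norm p < 1"
  shows "(\<lambda>n. qbinom p (2 * n) (n + k)) \<longlonglongrightarrow> 1 / qpoch p p"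
proof -
  define P where "P = qpoch p p"
  have "P \<noteq> 0"
    unfolding P_def by (intro qpoch_nonzero assms)
  have double: "filterlim (\<lambda>n::nat. 2 * n) sequentially sequentially"
    by (intro filterlim_subseq) (auto simp: strict_mono_def)
  have "(\<lambda>n. qfact p (2 * n) / (qfact p (n + k) * qfact p (n - k))) \<longlonglongrightarrow> P / (P * P)"
    using \<open>P \<noteq> 0\<close> unfolding P_def
    by (intro tendsto_divide tendsto_mult filterlim_compose[OF qfact_tendsto[OF assms]] double
          filterlim_add_const_nat_at_top filterlim_minus_const_nat_at_top) auto
  moreover have "eventually (\<lambda>n. qfact p (2 * n) / (qfact p (n + k) * qfact p (n - k))
                                = qbinom p (2 * n) (n + k)) sequentially"
    using eventually_ge_at_top[of k]
    by eventually_elim (simp add: qbinom_def)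
  ultimately show ?thesis
    using \<open>P \<noteq> 0\<close> by (simp add: P_def Lim_transform_eventually)
qed

section \<open>A finite form of the Jacobi triple product\<close>

definition choose2 :: "int \<Rightarrow> nat" where
  "choose2 z = nat (z * (z - 1) div 2)"

lemma choose2_double: "2 * int (choose2 z) = z * (z - 1)"
proof -
  have "z * (z - 1) \<ge> 0"
    by (cases "z \<ge> 1") (auto intro: mult_nonpos_nonpos)
  moreover have "even (z * (z - 1))"
    by simp
  ultimately show ?thesis
    unfolding choose2_def by simp
qed

lemma choose2_add_1: "int (choose2 (z + 1)) = int (choose2 z) + z"
  using choose2_double[of z] choose2_double[of "z + 1"] by (simp add: algebra_simps)

lemma choose2_one_minus: "choose2 (1 - z) = choose2 z"
  using choose2_double[of z] choose2_double[of "1 - z"] by (simp add: algebra_simps)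

lemma choose2_Suc: "choose2 (int (Suc k)) = choose2 (int k) + k"
  using choose2_add_1[of "int k"] by (simp add: add.commute)

lemma sum_powers_mult_linear:
  fixes a :: "nat \<Rightarrow> 'a::comm_ring_1"
  assumes "a (Suc N) = 0"
  shows "(\<Sum>i\<le>N. a i * c ^ i) * (u + v * c)
         = (\<Sum>i\<le>Suc N. (u * a i + v * (if i = 0 then 0 else a (i - 1))) * c ^ i)"
proof -
  have "(\<Sum>i\<le>Suc N. (u * a i + v * (if i = 0 then 0 else a (i - 1))) * c ^ i)
        = u * (\<Sum>i\<le>Suc N. a i * c ^ i) + v * (\<Sum>i\<le>Suc N. (if i = 0 then 0 else a (i - 1)) * c ^ i)"
    by (simp add: sum.distrib sum_distrib_left algebra_simps)
  also have "(\<Sum>i\<le>Suc N. (if i = 0 then 0 else a (i - 1)) * c ^ i) = c * (\<Sum>i\<le>N. a i * c ^ i)"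
    by (subst sum.atMost_Suc_shift) (simp add: sum_distrib_left mult_ac)
  also have "(\<Sum>i\<le>Suc N. a i * c ^ i) = (\<Sum>i\<le>N. a i * c ^ i)"
    using assms by simp
  finally show ?thesis
    by (simp add: algebra_simps)
qed

lemma power_choose2_add_1:
  fixes p :: "'a::monoid_mult"
  assumes "int n + z = int k"
  shows "p ^ n * p ^ choose2 (z + 1) = p ^ k * p ^ choose2 z"
proof -
  have "int (n + choose2 (z + 1)) = int (k + choose2 z)"
    using assms choose2_add_1[of z] by simp
  then have "n + choose2 (z + 1) = k + choose2 z"
    by (simp only: of_nat_eq_iff)
  then show ?thesis
    by (simp only: power_add[symmetric])
qed

lemma qbinom_expansion_step:
  assumes "norm p < 1"
  shows "p ^ Suc m * (qbinom p m (Suc j) * p ^ choose2 (int (Suc j) - int m))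
           + qbinom p m j * p ^ choose2 (int j - int m)
         = qbinom p (Suc m) (Suc j) * p ^ choose2 (int j - int m)"
proof -
  have "int (Suc j) - int m = (int j - int m) + 1"
    by simp
  then have shift: "p ^ Suc m * p ^ choose2 (int (Suc j) - int m) = p ^ Suc j * p ^ choose2 (int j - int m)"
    by (simp only:) (rule power_choose2_add_1, simp)
  have "p ^ Suc m * (qbinom p m (Suc j) * p ^ choose2 (int (Suc j) - int m))
        = qbinom p m (Suc j) * (p ^ Suc m * p ^ choose2 (int (Suc j) - int m))"
    by (rule mult.left_commute)
  then show ?thesis
    unfolding shift by (simp add: qbinom_Suc_Suc[OF assms] algebra_simps)
qed

lemma qbinom_expansion:
  assumes "norm p < 1"
  shows "(\<Prod>j<m. c + p ^ Suc j) = (\<Sum>i\<le>m. qbinom p m i * p ^ choose2 (int i - int m) * c ^ i)"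
proof (induction m)
  case 0
  then show ?case
    using assms by (simp add: choose2_def)
next
  case (Suc m)
  define a where "a i = qbinom p m i * p ^ choose2 (int i - int m)" for i
  have "(\<Prod>j<Suc m. c + p ^ Suc j) = (\<Sum>i\<le>m. a i * c ^ i) * (p ^ Suc m + 1 * c)"
    using Suc by (simp add: a_def add.commute)
  also have "\<dots> = (\<Sum>i\<le>Suc m. (p ^ Suc m * a i + 1 * (if i = 0 then 0 else a (i - 1))) * c ^ i)"
    by (rule sum_powers_mult_linear) (simp add: a_def)
  also have "\<dots> = (\<Sum>i\<le>Suc m. qbinom p (Suc m) i * p ^ choose2 (int i - int (Suc m)) * c ^ i)"
  proof (intro sum.cong refl)
    fix i
    have "p ^ Suc m * p ^ choose2 (- int (Suc m) + 1) = p ^ 0 * p ^ choose2 (- int (Suc m))"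
      by (rule power_choose2_add_1) simp
    then show "(p ^ Suc m * a i + 1 * (if i = 0 then 0 else a (i - 1))) * c ^ i
               = qbinom p (Suc m) i * p ^ choose2 (int i - int (Suc m)) * c ^ i"
      using assms qbinom_expansion_step[OF assms, of m] by (cases i) (simp_all add: a_def)
  qed
  finally show ?case .
qed

lemma finite_jacobi_triple_product_step:
  assumes "norm p < 1"
  shows "qbinom p (n + m) (Suc j) * p ^ choose2 (int (Suc j) - int m)
           + p ^ n * (qbinom p (n + m) j * p ^ choose2 (int j - int m))
         = qbinom p (Suc n + m) (Suc j) * p ^ choose2 (int (Suc j) - int m)"
proof (cases "j \<le> n + m")
  case True
  have "int (Suc j) - int m = (int j - int m) + 1"
    by simp
  then have shift: "p ^ n * p ^ choose2 (int j - int m) = p ^ (n + m - j) * p ^ choose2 (int (Suc j) - int m)"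
    by (simp only:) (rule power_choose2_add_1[symmetric], use True in simp)
  have "p ^ n * (qbinom p (n + m) j * p ^ choose2 (int j - int m))
        = qbinom p (n + m) j * (p ^ n * p ^ choose2 (int j - int m))"
    by (rule mult.left_commute)
  then show ?thesis
    unfolding shift by (simp add: qbinom_Suc_Suc'[OF assms] algebra_simps)
qed simp

lemma finite_jacobi_triple_product:
  assumes "norm p < 1"
  shows "(\<Prod>j<n. 1 + c * p ^ j) * (\<Prod>j<m. c + p ^ Suc j)
         = (\<Sum>i\<le>n + m. qbinom p (n + m) i * p ^ choose2 (int i - int m) * c ^ i)"
proof (induction n)
  case 0
  then show ?case
    using qbinom_expansion[OF assms] by simp
next
  case (Suc n)
  define a where "a i = qbinom p (n + m) i * p ^ choose2 (int i - int m)" for i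
  have "(\<Prod>j<Suc n. 1 + c * p ^ j) * (\<Prod>j<m. c + p ^ Suc j) = (\<Sum>i\<le>n + m. a i * c ^ i) * (1 + p ^ n * c)"
    using Suc by (simp add: a_def algebra_simps)
  also have "\<dots> = (\<Sum>i\<le>Suc (n + m). (1 * a i + p ^ n * (if i = 0 then 0 else a (i - 1))) * c ^ i)"
    by (rule sum_powers_mult_linear) (simp add: a_def)
  also have "\<dots> = (\<Sum>i\<le>Suc n + m. qbinom p (Suc n + m) i * p ^ choose2 (int i - int m) * c ^ i)"
  proof (intro sum.cong)
    fix i
    show "(1 * a i + p ^ n * (if i = 0 then 0 else a (i - 1))) * c ^ i
          = qbinom p (Suc n + m) i * p ^ choose2 (int i - int m) * c ^ i"
      using assms finite_jacobi_triple_product_step[OF assms, of n m] by (cases i) (simp_all add: a_def)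
  qed simp_all
  finally show ?case .
qed

section \<open>The Jacobi triple product\<close>

text \<open>\<open>theta p c = \<Sum>\<^sub>n\<^sub>\<in>\<^sub>\<int> p\<^bsup>n(n-1)/2\<^esup> c\<^sup>n\<close>, Ramanujan's \<open>f(c, p/c)\<close>.\<close>

definition theta_term :: "complex \<Rightarrow> complex \<Rightarrow> int \<Rightarrow> complex" where
  "theta_term p c n = p ^ choose2 n * c powi n"

definition theta :: "complex \<Rightarrow> complex \<Rightarrow> complex" where
  "theta p c = infsum (theta_term p c) UNIV"

lemma choose2_minus_Suc: "choose2 (- int k - 1) = choose2 (int (Suc k)) + Suc k"
  using choose2_one_minus[of "- int k - 1"] choose2_Suc[of "Suc k"] by (simp add: add.commute)

lemma summable_power_choose2:
  fixes a w :: real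
  assumes "0 \<le> a" "a < 1" "0 \<le> w"
  shows "summable (\<lambda>k. a ^ choose2 (int k) * w ^ k)"
proof -
  have "(\<lambda>n. a ^ n * w) \<longlonglongrightarrow> 0 * w"
    using assms by (intro tendsto_mult tendsto_const LIMSEQ_power_zero) auto
  then have "eventually (\<lambda>n. a ^ n * w < 1/2) sequentially"
    by (intro order_tendstoD) auto
  then obtain N where N: "\<And>n. n \<ge> N \<Longrightarrow> a ^ n * w < 1/2"
    by (auto simp: eventually_sequentially)
  show ?thesis
  proof (rule summable_ratio_test[of "1/2" N])
    fix n
    assume "n \<ge> N"
    have "norm (a ^ choose2 (int (Suc n)) * w ^ Suc n) = (a ^ n * w) * (a ^ choose2 (int n) * w ^ n)"
      unfolding choose2_Suc using assms by (simp add: power_add abs_mult mult_ac)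
    also have "\<dots> \<le> 1/2 * (a ^ choose2 (int n) * w ^ n)"
      using N[OF \<open>n \<ge> N\<close>] assms by (intro mult_right_mono) auto
    also have "\<dots> = 1/2 * norm (a ^ choose2 (int n) * w ^ n)"
      using assms by simp
    finally show "norm (a ^ choose2 (int (Suc n)) * w ^ Suc n) \<le> 1/2 * norm (a ^ choose2 (int n) * w ^ n)" .
  qed simp
qed

lemma summable_norm_theta_term_nonneg:
  assumes "norm p < 1"
  shows "summable (\<lambda>k. norm (theta_term p c (int k)))"
  using summable_power_choose2[of "norm p" "norm c"] assms
  by (simp add: theta_term_def norm_mult norm_power)

lemma summable_norm_theta_term_neg:
  assumes "norm p < 1" "c \<noteq> 0"
  shows "summable (\<lambda>k. norm (theta_term p c (- int k - 1)))"
proof -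
  have "norm (theta_term p c (- int k - 1)) = norm p ^ choose2 (int (Suc k)) * (norm p / norm c) ^ Suc k" for k
  proof -
    have "- int k - 1 = - int (Suc k)"
      by simp
    then have "c powi (- int k - 1) = 1 / c ^ Suc k"
      by (simp only: power_int_minus power_int_of_nat inverse_eq_divide)
    then show ?thesis
      unfolding theta_term_def choose2_minus_Suc power_add
      by (simp add: norm_mult norm_divide norm_power power_add power_divide del: power_Suc)
  qed
  moreover have "summable (\<lambda>k. norm p ^ choose2 (int (Suc k)) * (norm p / norm c) ^ Suc k)"
  proof -
    have "summable (\<lambda>k. norm p ^ choose2 (int k) * (norm p / norm c) ^ k)"
      using assms by (intro summable_power_choose2) auto
    then show ?thesis
      by (subst summable_Suc_iff)
  qed
  ultimately show ?thesis
    by simp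
qed

lemma int_eq_range_nonneg_Un_neg: "(UNIV :: int set) = range int \<union> range (\<lambda>k. - int k - 1)"
proof -
  have "z \<in> range int \<union> range (\<lambda>k. - int k - 1)" for z :: int
  proof (cases "z \<ge> 0")
    case True
    then show ?thesis
      by (metis UnI1 nonneg_int_cases rangeI)
  next
    case False
    then have "z = - int (nat (- z - 1)) - 1"
      by simp
    then show ?thesis
      by blast
  qed
  then show ?thesis
    by auto
qed

lemma theta_has_sum:
  assumes "norm p < 1" "c \<noteq> 0"
  shows "(theta_term p c has_sum (\<Sum>k. theta_term p c (int k)) + (\<Sum>k. theta_term p c (- int k - 1))) UNIV"
proof -
  have "inj (int :: nat \<Rightarrow> int)" "inj (\<lambda>k::nat. - int k - 1)"
    by (auto simp: inj_def)
  moreover have "((\<lambda>k. theta_term p c (int k)) has_sum (\<Sum>k. theta_term p c (int k))) UNIV"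
    "((\<lambda>k. theta_term p c (- int k - 1)) has_sum (\<Sum>k. theta_term p c (- int k - 1))) UNIV"
    using summable_norm_theta_term_nonneg[OF assms(1)] summable_norm_theta_term_neg[OF assms]
    by (metis norm_summable_imp_has_sum summable_sums summable_norm_cancel)+
  ultimately have "(theta_term p c has_sum (\<Sum>k. theta_term p c (int k))) (range int)"
    "(theta_term p c has_sum (\<Sum>k. theta_term p c (- int k - 1))) (range (\<lambda>k. - int k - 1))"
    by (simp_all add: has_sum_reindex o_def)
  moreover have "range int \<inter> range (\<lambda>k. - int k - 1) = {}"
    by auto
  ultimately show ?thesis
    unfolding int_eq_range_nonneg_Un_neg by (rule has_sum_Un_disjoint)
qed

lemma theta_summable: "norm p < 1 \<Longrightarrow> c \<noteq> 0 \<Longrightarrow> theta_term p c summable_on UNIV"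
  using theta_has_sum summable_on_def by blast

lemma theta_sums:
  assumes "norm p < 1" "c \<noteq> 0"
  shows "(\<lambda>k. theta_term p c (int k) + theta_term p c (- int k - 1)) sums theta p c"
proof -
  have "theta p c = (\<Sum>k. theta_term p c (int k)) + (\<Sum>k. theta_term p c (- int k - 1))"
    unfolding theta_def by (rule infsumI[OF theta_has_sum[OF assms]])
  moreover have "summable (\<lambda>k. theta_term p c (int k))" "summable (\<lambda>k. theta_term p c (- int k - 1))"
    using summable_norm_theta_term_nonneg[OF assms(1)] summable_norm_theta_term_neg[OF assms]
    by (simp_all add: summable_norm_cancel)
  ultimately show ?thesis
    using sums_add[OF summable_sums summable_sums] by simp
qed

lemma sum_atMost_double_split:
  "(\<Sum>i\<le>2*n. f i) = (\<Sum>k\<le>n. f (n + k)) + (\<Sum>k<n. f (n - Suc k))"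
proof -
  have "(\<Sum>i\<le>2*n. f i) = (\<Sum>i<n. f i) + (\<Sum>i\<in>{n..2*n}. f i)"
    by (subst sum.union_disjoint[symmetric]) (auto intro: sum.cong)
  also have "(\<Sum>i\<in>{n..2*n}. f i) = (\<Sum>k\<le>n. f (n + k))"
    by (rule sum.reindex_bij_witness[where i="\<lambda>k. n + k" and j="\<lambda>i. i - n"]) auto
  also have "(\<Sum>i<n. f i) = (\<Sum>k<n. f (n - Suc k))"
    by (rule sum.nat_diff_reindex[symmetric])
  finally show ?thesis
    by (simp add: add.commute)
qed

lemma finite_jacobi_triple_product_symmetric:
  assumes "norm p < 1" "c \<noteq> 0"
  shows "(\<Prod>j<n. (1 + c * p ^ j) * (1 + p ^ Suc j / c))
         = (\<Sum>k\<le>n. qbinom p (2*n) (n + k) * theta_term p c (int k)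
                    + qbinom p (2*n) (n + Suc k) * theta_term p c (- int k - 1))"
proof -
  define g where "g i = qbinom p (2*n) i * theta_term p c (int i - int n)" for i
  have "c + p ^ Suc j = c * (1 + p ^ Suc j / c)" for j
    using assms(2) by (simp add: field_simps)
  then have prod_shift: "(\<Prod>j<n. c + p ^ Suc j) = c ^ n * (\<Prod>j<n. 1 + p ^ Suc j / c)"
    by (simp only: prod.distrib prod_constant card_lessThan)
  have "(\<Prod>j<n. (1 + c * p ^ j) * (1 + p ^ Suc j / c))
        = (\<Prod>j<n. 1 + c * p ^ j) * (\<Prod>j<n. c + p ^ Suc j) / c ^ n"
    unfolding prod.distrib prod_shift using assms(2) by simp
  also have "\<dots> = (\<Sum>i\<le>2*n. qbinom p (2*n) i * p ^ choose2 (int i - int n) * c ^ i) / c ^ n"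
    unfolding mult_2 by (simp only: finite_jacobi_triple_product[OF assms(1)])
  also have "\<dots> = (\<Sum>i\<le>2*n. g i)"
    unfolding sum_divide_distrib g_def theta_term_def
    using assms(2) by (intro sum.cong) (simp_all add: power_int_diff)
  also have "\<dots> = (\<Sum>k\<le>n. g (n + k)) + (\<Sum>k<n. g (n - Suc k))"
    by (rule sum_atMost_double_split)
  also have "(\<Sum>k<n. g (n - Suc k)) = (\<Sum>k\<le>n. qbinom p (2*n) (n + Suc k) * theta_term p c (- int k - 1))"
  proof -
    have "g (n - Suc k) = qbinom p (2*n) (n + Suc k) * theta_term p c (- int k - 1)" if "k < n" for k
    proof -
      have "int (n - Suc k) - int n = - int k - 1"
        using that by (simp add: of_nat_diff)
      moreover have "qbinom p (2*n) (n - Suc k) = qbinom p (2*n) (n + Suc k)"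
        using that qbinom_symmetric[of "n + Suc k" "2*n" p] by (simp add: Suc_diff_Suc)
      ultimately show ?thesis
        unfolding g_def by (simp only:)
    qed
    then show ?thesis
      by (simp add: lessThan_Suc_atMost[symmetric])
  qed
  finally show ?thesis
    by (simp add: g_def sum.distrib)
qed

lemma finite_jacobi_triple_product_tendsto:
  assumes "norm p < 1" "c \<noteq> 0"
  shows "(\<lambda>n. \<Prod>j<n. (1 + c * p ^ j) * (1 + p ^ Suc j / c)) \<longlonglongrightarrow> theta p c / qpoch p p"
proof -
  define P where "P = qpoch p p"
  define t where "t = theta_term p c"
  define a where "a k n = qbinom p (2*n) (n + k) * t (int k) + qbinom p (2*n) (n + Suc k) * t (- int k - 1)"
    for k n
  obtain B where B: "\<And>m i. norm (qbinom p m i) \<le> B"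
    using qbinom_bounded[OF assms(1)] by blast
  text \<open>Each Gaussian binomial tends to \<open>1 / P\<close> and all of them are bounded by \<open>B\<close>, so
    Tannery's theorem carries the finite expansion to the limit.\<close>
  define M where "M k = B * norm (t (int k)) + B * norm (t (- int k - 1))" for k
  define b where "b k = 1 / P * t (int k) + 1 / P * t (- int k - 1)" for k
  have "(\<lambda>n. a k n) \<longlonglongrightarrow> b k" for k
    unfolding a_def b_def P_def by (intro tendsto_add tendsto_mult tendsto_const qbinom_central_tendsto assms(1))
  moreover have "eventually (\<lambda>(k, n). norm (a k n) \<le> M k) (at_top \<times>\<^sub>F sequentially)"
  proof (intro always_eventually allI, clarify)
    fix k n
    show "norm (a k n) \<le> M k"
      unfolding a_def M_def
      by (rule order.trans[OF norm_triangle_ineq add_mono]) (simp_all add: norm_mult B mult_right_mono)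
  qed
  moreover have "summable M"
    unfolding M_def t_def
    by (intro summable_add summable_mult summable_norm_theta_term_nonneg summable_norm_theta_term_neg assms)
  ultimately have "(\<lambda>n. \<Sum>k. a k n) \<longlonglongrightarrow> (\<Sum>k. b k)"
    using tannerys_theorem[where a = a and b = b and M = M and F = sequentially] by simp
  moreover have "(\<Sum>k. a k n) = (\<Prod>j<n. (1 + c * p ^ j) * (1 + p ^ Suc j / c))" for n
  proof -
    have "(\<Sum>k. a k n) = (\<Sum>k\<le>n. a k n)"
      by (rule suminf_finite) (auto simp: a_def)
    then show ?thesis
      unfolding finite_jacobi_triple_product_symmetric[OF assms] by (simp add: a_def t_def)
  qed
  moreover have "(\<Sum>k. b k) = theta p c / P"
    using sums_mult[OF theta_sums[OF assms], of "1 / P"] by (simp add: b_def t_def distrib_left sums_iff)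
  ultimately show ?thesis
    by (simp add: P_def)
qed

lemma jacobi_triple_product:
  assumes "norm p < 1" "c \<noteq> 0"
  shows "theta p c = qpoch (-c) p * qpoch (-(p/c)) p * qpoch p p"
proof -
  have "(\<lambda>n. \<Prod>j<n. (1 + c * p ^ j) * (1 + p ^ Suc j / c)) \<longlonglongrightarrow> qpoch (-c) p * qpoch (-(p/c)) p"
    using tendsto_mult[OF qpoch_tendsto[OF assms(1), of "-c"] qpoch_tendsto[OF assms(1), of "-(p/c)"]]
    by (simp add: prod.distrib)
  then have "theta p c / qpoch p p = qpoch (-c) p * qpoch (-(p/c)) p"
    using finite_jacobi_triple_product_tendsto[OF assms] LIMSEQ_unique by blast
  moreover have "qpoch p p \<noteq> 0"
    by (intro qpoch_nonzero assms)
  ultimately show ?thesis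
    by (simp add: field_simps)
qed

section \<open>Functional equations of the theta function\<close>

lemma theta_mult_shift:
  assumes "norm r < 1" "r \<noteq> 0" "z \<noteq> 0"
  shows "theta r (r * z) = theta r z / z"
proof -
  have "theta r (r * z) = (1 + 1 / z) * qpoch (-(r * z)) r * qpoch (-(r / z)) r * qpoch r r"
    using assms qpoch_unfold[OF assms(1), of "-(1 / z)"]
    by (simp add: jacobi_triple_product)
  also have "\<dots> = theta r z / z"
    using assms qpoch_unfold[OF assms(1), of "-z"]
    by (simp add: jacobi_triple_product field_simps)
  finally show ?thesis .
qed

lemma theta_inverse:
  assumes "norm r < 1" "r \<noteq> 0" "z \<noteq> 0"
  shows "theta r (1 / z) = theta r z / z"
  using assms theta_mult_shift[OF assms] by (simp add: jacobi_triple_product mult_ac)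

lemma theta_reflect:
  assumes "norm p < 1" "p \<noteq> 0" "z \<noteq> 0"
  shows "theta p (p / z) = theta p z"
  using assms by (simp add: jacobi_triple_product)

lemma has_sum_mult_family:
  fixes f :: "'a \<Rightarrow> complex" and g :: "'b \<Rightarrow> complex"
  assumes "f summable_on UNIV" "g summable_on UNIV"
  shows "((\<lambda>(x, y). f x * g y) has_sum (infsum f UNIV * infsum g UNIV)) UNIV"
proof -
  have f: "(\<lambda>x. norm (f x)) summable_on UNIV" and g: "(\<lambda>y. norm (g y)) summable_on UNIV"
    using assms summable_on_iff_abs_summable_on_complex by blast+
  have "(\<lambda>x. norm (infsum (\<lambda>y. norm (f x * g y)) UNIV))
        = (\<lambda>x. norm (f x) * infsum (\<lambda>y. norm (g y)) UNIV)"
    by (simp add: norm_mult infsum_cmult_right' infsum_nonneg)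
  then have "(\<lambda>x. norm (infsum (\<lambda>y. norm (f x * g y)) UNIV)) summable_on UNIV"
    using summable_on_cmult_left[OF f] by simp
  moreover have "(\<lambda>y. norm (f x * g y)) summable_on UNIV" for x
    unfolding norm_mult by (rule summable_on_cmult_right[OF g])
  ultimately have "(\<lambda>z. norm ((\<lambda>(x, y). f x * g y) z)) summable_on Sigma UNIV (\<lambda>_. UNIV)"
    using Infinite_Sum.abs_summable_on_Sigma_iff[of "\<lambda>(x, y). f x * g y" UNIV "\<lambda>_. UNIV"] by simp
  then have summable: "(\<lambda>(x, y). f x * g y) summable_on UNIV"
    using abs_summable_summable by force
  have "infsum (\<lambda>(x, y). f x * g y) UNIV = infsum (\<lambda>x. infsum (\<lambda>y. f x * g y) UNIV) UNIV"
    using infsum_Sigma'_banach[of "\<lambda>x y. f x * g y" UNIV "\<lambda>_. UNIV"] summable by simp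
  also have "\<dots> = infsum f UNIV * infsum g UNIV"
    by (simp add: infsum_cmult_right' infsum_cmult_left')
  finally show ?thesis
    using has_sum_infsum[OF summable] by simp
qed

lemma choose2_add_diff:
  "int (choose2 (i + j)) + int (choose2 (i - j)) = 2 * int (choose2 i) + 2 * int (choose2 j) + j"
proof -
  have "2 * (int (choose2 (i + j)) + int (choose2 (i - j))) = 2 * (2 * int (choose2 i) + 2 * int (choose2 j) + j)"
    by (simp only: distrib_left choose2_double) (simp add: algebra_simps)
  then show ?thesis
    by simp
qed

lemma choose2_add_1_diff:
  "int (choose2 (i + j + 1)) + int (choose2 (i - j)) = 2 * int (choose2 i) + i + 2 * int (choose2 j) + 2 * j"
proof -
  have "2 * (int (choose2 (i + j + 1)) + int (choose2 (i - j))) = 2 * (2 * int (choose2 i) + i + 2 * int (choose2 j) + 2 * j)"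
    by (simp only: distrib_left choose2_double) (simp add: algebra_simps)
  then show ?thesis
    by simp
qed

lemma theta_term_powi: "theta_term p c n = p powi int (choose2 n) * c powi n"
  by (simp add: theta_term_def)

lemma theta_term_square_powi: "theta_term (p^2) c n = p powi (2 * int (choose2 n)) * c powi n"
proof -
  have "(p^2) ^ choose2 n = p powi (2 * int (choose2 n))"
    by (metis of_nat_mult of_nat_numeral power_int_of_nat power_mult)
  then show ?thesis
    by (simp add: theta_term_def)
qed

lemma theta_term_mult_even:
  assumes "p \<noteq> 0" "a \<noteq> 0" "b \<noteq> 0"
  shows "theta_term p a (i + j) * theta_term p b (i - j)
         = theta_term (p^2) (a * b) i * theta_term (p^2) (p * a / b) j"
proof -
  have "theta_term p a (i + j) * theta_term p b (i - j)
        = p powi (int (choose2 (i + j)) + int (choose2 (i - j))) * (a powi i * a powi j) * (b powi i / b powi j)"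
    using assms by (simp add: theta_term_powi power_int_add power_int_diff)
  also have "\<dots> = p powi (2 * int (choose2 i) + 2 * int (choose2 j) + j) * (a powi i * a powi j) * (b powi i / b powi j)"
    unfolding choose2_add_diff ..
  also have "theta_term (p^2) (a * b) i * theta_term (p^2) (p * a / b) j = \<dots>"
    using assms by (simp add: theta_term_square_powi power_int_add power_int_mult_distrib power_int_divide_distrib)
  finally show ?thesis
    by simp
qed

lemma theta_term_mult_odd:
  assumes "p \<noteq> 0" "a \<noteq> 0" "b \<noteq> 0"
  shows "theta_term p a (i + j + 1) * theta_term p b (i - j)
         = a * (theta_term (p^2) (p * a * b) i * theta_term (p^2) (p^2 * a / b) j)"
proof -
  have "theta_term p a (i + j + 1) * theta_term p b (i - j)
        = p powi (int (choose2 (i + j + 1)) + int (choose2 (i - j))) * (a powi i * a powi j * a) * (b powi i / b powi j)"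
    using assms by (simp add: theta_term_powi power_int_add power_int_diff)
  also have "\<dots> = p powi (2 * int (choose2 i) + i + 2 * int (choose2 j) + 2 * j) * (a powi i * a powi j * a) * (b powi i / b powi j)"
    unfolding choose2_add_1_diff ..
  also have "a * (theta_term (p^2) (p * a * b) i * theta_term (p^2) (p^2 * a / b) j) = \<dots>"
    using assms by (simp add: theta_term_square_powi power_int_add power_int_mult_distrib power_int_divide_distrib
                              power_int_mult)
  finally show ?thesis
    by simp
qed

lemma int_pairs_parity_split:
  "range (\<lambda>(i, j). (i + j, i - j)) \<union> range (\<lambda>(i, j). (i + j + 1, i - j)) = (UNIV :: (int \<times> int) set)"
proof -
  have "(m, n) \<in> range (\<lambda>(i, j). (i + j, i - j)) \<union> range (\<lambda>(i, j). (i + j + 1, i - j))" for m n :: int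
  proof (cases "even (m + n)")
    case True
    then have "(m, n) = (\<lambda>(i, j). (i + j, i - j)) ((m + n) div 2, (m + n) div 2 - n)"
      by auto
    then show ?thesis
      by blast
  next
    case False
    then have "m + n = 2 * ((m + n) div 2) + 1"
      by presburger
    then have "(m, n) = (\<lambda>(i, j). (i + j + 1, i - j)) ((m + n) div 2, (m + n) div 2 - n)"
      by simp
    then show ?thesis
      by blast
  qed
  then show ?thesis
    by auto
qed

lemma int_pairs_parity_disjoint:
  "range (\<lambda>(i, j). (i + j, i - j)) \<inter> range (\<lambda>(i, j). (i + j + 1, i - j)) = ({} :: (int \<times> int) set)"
proof -
  have False if "i + j = i' + j' + 1" "i - j = i' - j'" for i j i' j' :: int
  proof -
    from that have "2 * i = 2 * i' + 1"
      by linarith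
    then show False
      by presburger
  qed
  then show ?thesis
    by fastforce
qed

lemma theta_mult_theta:
  assumes "norm p < 1" "p \<noteq> 0" "a \<noteq> 0" "b \<noteq> 0"
  shows "theta p a * theta p b
         = theta (p^2) (a * b) * theta (p^2) (p * a / b) + a * (theta (p^2) (p * a * b) * theta (p^2) (p^2 * a / b))"
proof -
  have p2: "norm (p^2) < 1"
    using assms(1) by (simp add: norm_power power_less_one_iff)
  define h where "h = (\<lambda>(m, n). theta_term p a m * theta_term p b n)"
  define even odd :: "int \<times> int \<Rightarrow> int \<times> int"
    where "even = (\<lambda>(i, j). (i + j, i - j))" and "odd = (\<lambda>(i, j). (i + j + 1, i - j))"
  have "(h has_sum theta p a * theta p b) UNIV"
    unfolding h_def theta_def by (intro has_sum_mult_family theta_summable assms)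
  moreover have "(h has_sum theta (p^2) (a * b) * theta (p^2) (p * a / b)) (range even)"
  proof -
    have "h \<circ> even = (\<lambda>(i, j). theta_term (p^2) (a * b) i * theta_term (p^2) (p * a / b) j)"
      by (rule ext, clarify) (simp add: h_def even_def theta_term_mult_even assms)
    moreover have "inj even"
      by (auto simp: inj_def even_def)
    moreover have "((\<lambda>(i, j). theta_term (p^2) (a * b) i * theta_term (p^2) (p * a / b) j)
                     has_sum theta (p^2) (a * b) * theta (p^2) (p * a / b)) UNIV"
      unfolding theta_def using assms by (intro has_sum_mult_family theta_summable p2) auto
    ultimately show ?thesis
      by (simp add: has_sum_reindex)
  qed
  moreover have "(h has_sum a * (theta (p^2) (p * a * b) * theta (p^2) (p^2 * a / b))) (range odd)"
  proof -
    have "h \<circ> odd = (\<lambda>z. a * (case z of (i, j) \<Rightarrow> theta_term (p^2) (p * a * b) i * theta_term (p^2) (p^2 * a / b) j))"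
      by (rule ext, clarify) (simp add: h_def odd_def theta_term_mult_odd assms)
    moreover have "inj odd"
      by (auto simp: inj_def odd_def)
    moreover have "((\<lambda>z. a * (case z of (i, j) \<Rightarrow> theta_term (p^2) (p * a * b) i * theta_term (p^2) (p^2 * a / b) j))
                     has_sum a * (theta (p^2) (p * a * b) * theta (p^2) (p^2 * a / b))) UNIV"
      unfolding theta_def using assms by (intro has_sum_cmult_right has_sum_mult_family theta_summable p2) auto
    ultimately show ?thesis
      by (simp add: has_sum_reindex)
  qed
  moreover have "range even \<inter> range odd = {}" "range even \<union> range odd = UNIV"
    unfolding even_def odd_def by (rule int_pairs_parity_disjoint int_pairs_parity_split)+
  ultimately show ?thesis
    using has_sum_Un_disjoint has_sum_unique by metis
qed

definition theta_pair :: "complex \<Rightarrow> complex \<Rightarrow> complex \<Rightarrow> complex" where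
  "theta_pair p x y = theta p (-(x * y)) * theta p (-(x / y))"

lemma theta_pair_dissect:
  assumes "norm p < 1" "p \<noteq> 0" "x \<noteq> 0" "y \<noteq> 0"
  shows "theta_pair p x y
         = theta (p^2) (x^2) * theta (p^2) (p * y^2) - x / y * theta (p^2) (p * x^2) * theta (p^2) (y^2)"
proof -
  have p2: "norm (p^2) < 1"
    using assms(1) by (simp add: norm_power power_less_one_iff)
  have "theta_pair p x y = theta (p^2) (x^2) * theta (p^2) (p * y^2)
                           - x * y * (theta (p^2) (p * x^2) * theta (p^2) (p^2 * y^2))"
    using theta_mult_theta[OF assms(1,2), of "-(x * y)" "-(x / y)"] assms
    by (simp add: theta_pair_def power2_eq_square field_simps)
  also have "theta (p^2) (p^2 * y^2) = theta (p^2) (y^2) / y^2"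
    using assms by (intro theta_mult_shift p2) auto
  finally show ?thesis
    using assms by (simp add: power2_eq_square field_simps)
qed

text \<open>By \<open>theta_pair_dissect\<close> every \<open>theta_pair p x y\<close> is a minor \<open>A x B y - (x / y) B x A y\<close>
  with \<open>A z = theta (p\<^sup>2) (z\<^sup>2)\<close>, \<open>B z = theta (p\<^sup>2) (p z\<^sup>2)\<close>, and such minors satisfy a
  Pl\<ouml>cker relation.\<close>

lemma theta_pair_weierstrass:
  assumes "norm p < 1" "p \<noteq> 0" "x \<noteq> 0" "y \<noteq> 0" "u \<noteq> 0" "v \<noteq> 0"
  shows "theta_pair p x y * theta_pair p u v - theta_pair p x v * theta_pair p u y
         = u / y * theta_pair p y v * theta_pair p x u"
  using assms by (simp add: theta_pair_dissect field_simps)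

lemma theta_pair_one:
  assumes "norm p < 1" "p \<noteq> 0" "y \<noteq> 0"
  shows "theta_pair p 1 y = - (theta p (-y) ^ 2) / y"
  using theta_inverse[OF assms(1,2), of "-y"] assms by (simp add: theta_pair_def power2_eq_square)

lemma theta_pair_sqrt:
  assumes "norm p < 1" "p \<noteq> 0" "x^2 = p" "y \<noteq> 0"
  shows "theta_pair p x y = (theta p (-(x / y)))^2"
proof -
  have "x \<noteq> 0"
    using assms by auto
  then have "-(x * y) = p / (-(x / y))"
    using assms by (simp add: power2_eq_square field_simps)
  then show ?thesis
    using theta_reflect[OF assms(1,2), of "-(x / y)"] assms \<open>x \<noteq> 0\<close>
    by (simp add: theta_pair_def power2_eq_square)
qed

lemma theta_quintic_identity:
  fixes q :: complex
  assumes "q \<noteq> 0" "norm q < 1"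
  defines "\<theta> \<equiv> theta (q^10)"
  shows "(\<theta> (q^2) * \<theta> (q^4))^2 - q * (\<theta> q * \<theta> (q^3))^2 = \<theta> (-q) * \<theta> (-(q^3)) * (\<theta> (-(q^5)))^2"
proof -
  have p: "norm (q^10) < 1" "q^10 \<noteq> 0" "(q^5)^2 = q^10"
    using assms by (simp_all add: norm_power power_less_one_iff flip: power_mult)
  have "theta_pair (q^10) 1 (-q) * theta_pair (q^10) (q^5) (-(q^2))
        - theta_pair (q^10) 1 (-(q^2)) * theta_pair (q^10) (q^5) (-q)
        = q^5 / (-q) * theta_pair (q^10) (-q) (-(q^2)) * theta_pair (q^10) 1 (q^5)"
    using assms by (intro theta_pair_weierstrass p) auto
  moreover have "theta_pair (q^10) 1 (-q) = \<theta> q ^ 2 / q"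
    using theta_pair_one[OF p(1,2), of "-q"] assms by (simp add: \<theta>_def)
  moreover have "theta_pair (q^10) 1 (-(q^2)) = \<theta> (q^2) ^ 2 / q^2"
    using theta_pair_one[OF p(1,2), of "-(q^2)"] assms by (simp add: \<theta>_def)
  moreover have "theta_pair (q^10) 1 (q^5) = - (\<theta> (-(q^5)) ^ 2) / q^5"
    using theta_pair_one[OF p(1,2), of "q^5"] assms by (simp add: \<theta>_def)
  moreover have "theta_pair (q^10) (q^5) (-(q^2)) = \<theta> (q^3) ^ 2"
    using theta_pair_sqrt[OF p, of "-(q^2)"] assms by (simp add: \<theta>_def eval_nat_numeral)
  moreover have "theta_pair (q^10) (q^5) (-q) = \<theta> (q^4) ^ 2"
    using theta_pair_sqrt[OF p, of "-q"] assms by (simp add: \<theta>_def eval_nat_numeral)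
  moreover have "theta_pair (q^10) (-q) (-(q^2)) = \<theta> (-(q^3)) * (\<theta> (-q) / (-q))"
  proof -
    have "theta_pair (q^10) (-q) (-(q^2)) = \<theta> (-(q^3)) * \<theta> (1 / (-q))"
      using assms by (simp add: theta_pair_def \<theta>_def eval_nat_numeral)
    also have "\<theta> (1 / (-q)) = \<theta> (-q) / (-q)"
      unfolding \<theta>_def using assms by (intro theta_inverse p) auto
    finally show ?thesis .
  qed
  ultimately have "\<theta> q ^ 2 / q * \<theta> (q^3) ^ 2 - \<theta> (q^2) ^ 2 / q^2 * \<theta> (q^4) ^ 2
                   = q^5 / (-q) * (\<theta> (-(q^3)) * (\<theta> (-q) / (-q))) * (- (\<theta> (-(q^5)) ^ 2) / q^5)"
    by (simp only:)
  then have "q^2 * ((\<theta> (q^2) * \<theta> (q^4))^2 - q * (\<theta> q * \<theta> (q^3))^2)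
             = q^2 * (\<theta> (-q) * \<theta> (-(q^3)) * (\<theta> (-(q^5)))^2)"
    using assms(1) by (simp add: eval_nat_numeral field_simps)
  then show ?thesis
    using assms(1) by simp
qed

section \<open>Evaluation in terms of \<open>f\<^sub>m\<close>\<close>

lemma qf_nonzero:
  assumes "norm q < 1" "m > 0"
  shows "qf m q \<noteq> 0"
  unfolding qf_eq_qpoch using assms by (intro qpoch_nonzero) (simp_all add: norm_power power_less_one_iff)

lemma qpoch_power_double_base:
  assumes "norm q < 1" "m > 0"
  shows "qpoch (q^m) (q^(2*m)) = qf m q / qf (2*m) q"
proof -
  have "qf m q = (\<Prod>k<2. qpoch (q^m * (q^m)^k) ((q^m)^2))"
    unfolding qf_eq_qpoch using assms by (intro qpoch_dissect) (simp_all add: norm_power power_less_one_iff)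
  also have "\<dots> = qpoch (q^m) (q^(2*m)) * qf (2*m) q"
    by (simp add: numeral_2_eq_2 qf_eq_qpoch power_mult[symmetric] power_add[symmetric] mult.commute)
  finally show ?thesis
    using qf_nonzero[OF assms(1), of "2*m"] assms(2) by (simp add: field_simps)
qed

lemma qpoch_minus_power:
  assumes "norm q < 1" "m > 0"
  shows "qpoch (-(q^m)) (q^m) = qf (2*m) q / qf m q"
proof -
  have "qf m q * qpoch (-(q^m)) (q^m) = qf (2*m) q"
    using qpoch_mult_minus[of "q^m" "q^m"] assms
    by (simp add: qf_eq_qpoch norm_power power_less_one_iff power_mult[symmetric] mult.commute)
  then show ?thesis
    using qf_nonzero[OF assms] by (simp add: field_simps)
qed

lemma qpoch_minus_power_double_base:
  assumes "norm q < 1" "m > 0"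
  shows "qpoch (-(q^m)) (q^(2*m)) = qf (2*m) q ^ 2 / (qf m q * qf (4*m) q)"
proof -
  have "qpoch (q^m) (q^(2*m)) * qpoch (-(q^m)) (q^(2*m)) = qpoch (q^(2*m)) (q^(2*(2*m)))"
    using qpoch_mult_minus[of "q^(2*m)" "q^m"] assms
    by (simp add: norm_power power_less_one_iff power_mult[symmetric] mult.commute)
  then have "qf m q / qf (2*m) q * qpoch (-(q^m)) (q^(2*m)) = qf (2*m) q / qf (4*m) q"
    using qpoch_power_double_base[OF assms(1), of m] qpoch_power_double_base[OF assms(1), of "2*m"] assms(2)
    by simp
  then show ?thesis
    using qf_nonzero[OF assms(1)] assms(2) by (simp add: field_simps power2_eq_square)
qed

lemma theta_q10_power:
  assumes "q \<noteq> 0" "norm q < 1" "0 < a" "a < 10"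
  shows "theta (q^10) (q^a) = qpoch (-(q^a)) (q^10) * qpoch (-(q^(10-a))) (q^10) * qf 10 q"
  using assms jacobi_triple_product[of "q^10" "q^a"]
  by (simp add: qf_eq_qpoch norm_power power_less_one_iff power_diff)

lemma theta_q10_minus_power:
  assumes "q \<noteq> 0" "norm q < 1" "0 < a" "a < 10"
  shows "theta (q^10) (-(q^a)) = qpoch (q^a) (q^10) * qpoch (q^(10-a)) (q^10) * qf 10 q"
  using assms jacobi_triple_product[of "q^10" "-(q^a)"]
  by (simp add: qf_eq_qpoch norm_power power_less_one_iff power_diff)

context
  fixes q :: complex
  assumes q0: "q \<noteq> 0" and q1: "norm q < 1"
begin

lemma theta_q10_minus_q_q3: "theta (q^10) (-q) * theta (q^10) (-(q^3)) = qf 1 q * qf 10 q ^ 3 / (qf 2 q * qf 5 q)"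
proof -
  have "qpoch q (q^2) = qpoch q (q^10) * qpoch (q^3) (q^10) * qpoch (q^5) (q^10) * qpoch (q^7) (q^10) * qpoch (q^9) (q^10)"
    using qpoch_dissect_5[of "q^2" q] q1 by (simp add: norm_power power_less_one_iff power_Suc[symmetric] del: power_Suc)
  then have "theta (q^10) (-q) * theta (q^10) (-(q^3)) * qpoch (q^5) (q^10) = qpoch q (q^2) * (qf 10 q * qf 10 q)"
    using theta_q10_minus_power[OF q0 q1, of 1] theta_q10_minus_power[OF q0 q1, of 3] by (simp add: mult_ac)
  from this[unfolded qpoch_power_double_base[OF q1, of 1, simplified]
                    qpoch_power_double_base[OF q1, of 5, simplified]]
  show ?thesis
    using qf_nonzero[OF q1] by (simp add: field_simps power3_eq_cube)
qed

lemma theta_q10_minus_q5: "theta (q^10) (-(q^5)) = qf 5 q ^ 2 / qf 10 q"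
  using theta_q10_minus_power[OF q0 q1, of 5, simplified, unfolded qpoch_power_double_base[OF q1, of 5, simplified]]
    qf_nonzero[OF q1]
  by (simp add: field_simps power2_eq_square)

lemma theta_q10_q2_q4: "theta (q^10) (q^2) * theta (q^10) (q^4) = qf 4 q * qf 10 q ^ 3 / (qf 2 q * qf 20 q)"
proof -
  have "qpoch (-(q^2)) (q^2) = qpoch (-(q^2)) (q^10) * qpoch (-(q^4)) (q^10) * qpoch (-(q^6)) (q^10)
                               * qpoch (-(q^8)) (q^10) * qpoch (-(q^10)) (q^10)"
    using qpoch_dissect_5[of "q^2" "-(q^2)"] q1 by (simp add: norm_power power_less_one_iff)
  then have "theta (q^10) (q^2) * theta (q^10) (q^4) * qpoch (-(q^10)) (q^10) = qpoch (-(q^2)) (q^2) * (qf 10 q * qf 10 q)"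
    using theta_q10_power[OF q0 q1, of 2] theta_q10_power[OF q0 q1, of 4] by (simp add: mult_ac)
  from this[unfolded qpoch_minus_power[OF q1, of 2, simplified] qpoch_minus_power[OF q1, of 10, simplified]]
  show ?thesis
    using qf_nonzero[OF q1] by (simp add: field_simps power3_eq_cube)
qed

lemma theta_q10_q_q3: "theta (q^10) q * theta (q^10) (q^3) = qf 2 q ^ 2 * qf 5 q * qf 20 q / (qf 1 q * qf 4 q)"
proof -
  have "qpoch (-q) (q^2) = qpoch (-q) (q^10) * qpoch (-(q^3)) (q^10) * qpoch (-(q^5)) (q^10)
                           * qpoch (-(q^7)) (q^10) * qpoch (-(q^9)) (q^10)"
    using qpoch_dissect_5[of "q^2" "-q"] q1 by (simp add: norm_power power_less_one_iff power_Suc[symmetric] del: power_Suc)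
  then have "theta (q^10) q * theta (q^10) (q^3) * qpoch (-(q^5)) (q^10) = qpoch (-q) (q^2) * (qf 10 q * qf 10 q)"
    using theta_q10_power[OF q0 q1, of 1] theta_q10_power[OF q0 q1, of 3] by (simp add: mult_ac)
  from this[unfolded qpoch_minus_power_double_base[OF q1, of 1, simplified]
                    qpoch_minus_power_double_base[OF q1, of 5, simplified]]
  show ?thesis
    using qf_nonzero[OF q1] by (simp add: field_simps power2_eq_square)
qed

end

lemma eta_quotient_rearrange:
  fixes q f1 f2 f4 f5 f10 f20 :: complex
  assumes nonzero: "q \<noteq> 0" "f1 \<noteq> 0" "f2 \<noteq> 0" "f4 \<noteq> 0" "f5 \<noteq> 0" "f10 \<noteq> 0" "f20 \<noteq> 0"
  assumes "(f4 * f10^3 / (f2 * f20))^2 - q * (f2^2 * f5 * f20 / (f1 * f4))^2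
           = f1 * f10^3 / (f2 * f5) * (f5^2 / f10)^2"
  shows "f1^2 * f4^2 * f10^2 / (q * f2^2 * f5^2 * f20^2) - f2^4 * f20^2 / (f4^2 * f10^4)
         = f1^3 * f5 / (q * f2 * f10^3)"
proof -
  define K where "K = f1^2 / (q * f5^2 * f10^4)"
  have "f1^2 * f4^2 * f10^2 / (q * f2^2 * f5^2 * f20^2) - f2^4 * f20^2 / (f4^2 * f10^4)
        = ((f4 * f10^3 / (f2 * f20))^2 - q * (f2^2 * f5 * f20 / (f1 * f4))^2) * K"
    using nonzero unfolding K_def by (simp add: field_simps)
  also have "\<dots> = f1 * f10^3 / (f2 * f5) * (f5^2 / f10)^2 * K"
    unfolding assms(8) ..
  also have "\<dots> = f1^3 * f5 / (q * f2 * f10^3)"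
    using nonzero unfolding K_def by (simp add: field_simps) (simp add: algebra_simps power2_eq_square eval_nat_numeral)
  finally show ?thesis .
qed

theorem lemma2p6:
  fixes q :: complex
  assumes "0 < norm q" and "norm q < 1"
  shows "(qf 1 q)^2 * (qf 4 q)^2 * (qf 10 q)^2 / (q * (qf 2 q)^2 * (qf 5 q)^2 * (qf 20 q)^2)
         - (qf 2 q)^4 * (qf 20 q)^2 / ((qf 4 q)^2 * (qf 10 q)^4)
         = (qf 1 q)^3 * qf 5 q / (q * qf 2 q * (qf 10 q)^3)"
proof -
  have q0: "q \<noteq> 0"
    using assms(1) by auto
  have "(qf 4 q * qf 10 q ^ 3 / (qf 2 q * qf 20 q))^2
        - q * (qf 2 q ^ 2 * qf 5 q * qf 20 q / (qf 1 q * qf 4 q))^2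
        = qf 1 q * qf 10 q ^ 3 / (qf 2 q * qf 5 q) * (qf 5 q ^ 2 / qf 10 q)^2"
    using theta_quintic_identity[OF q0 assms(2)]
    unfolding theta_q10_q2_q4[OF q0 assms(2)] theta_q10_q_q3[OF q0 assms(2)]
      theta_q10_minus_q_q3[OF q0 assms(2)] theta_q10_minus_q5[OF q0 assms(2)] .
  then show ?thesis
    using q0 qf_nonzero[OF assms(2)] by (intro eta_quotient_rearrange) auto
qed

end
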